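(* In an instance with $N\subseteq C$, let $W$ be an outcome satisfying UPRF. Then for every $q\le k$: (1) $W$ is in the $\frac{5+\sqrt{33}}{2}$-$q$-core; (2) $W$ satisfies $3$-$q$-individual fairness if $k\le n$; (3) for every $\gamma>1$, $W$ is in the $\left(\gamma,\frac{5\gamma+1}{\gamma-1}\right)$-$q$-transferable core restricted to $\ell<2q$.
   Context: Let $(\mathcal X,d)$ be a metric space, $N=[n]$ a set of agents and $C$ a set of candidates located in $\mathcal X$, $k\in\mathbb N^+$; an outcome is $W\subseteq C$ with $|W|\le k$; $B(i,r)=\{x\in\mathcal X:d(i,x)\le r\}$; $d^q(i,W)$ is the distance from $i$ to its $q$-th closest point of $W$. UPRF: there are no $\ell\in\mathbb N$, no $N'\subseteq N$ with $|N'|\ge\ell n/k$, and no $y\in\mathbb R$ with $\max_{i,i'\in N'}d(i,i')\le y$ and $|\bigcup_{i\in N'}B(i,y)\cap W|<\ell$. $\alpha$-$q$-core: no $\ell\in\mathbb N$, $N'\subseteq N$ with $|N'|\ge\ell n/k$, and $C'\subseteq C$ with $q\le|C'|\le\ell$ such that $\alpha\,d^q(i,C')<d^q(i,W)$ for all $i\in N'$. $\beta$-$q$-individual fairness (for $N\subseteq C$, $k\le n$): $d^q(i,W)\le\beta\,r^q(i)$ for all $i\in N$, with $r^q(i)=\min\{r:|B(i,r)\cap N|\ge qn/k\}$. $(\gamma,\alpha)$-$q$-transferable core restricted to $\ell<2q$: no $\ell\in\mathbb N$ with $\ell<2q$, $N'\subseteq N$ with $|N'|\ge\gamma\ell n/k$,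 and $C'\subseteq C$ with $q\le|C'|\le\ell$ such that $\alpha\sum_{i\in N'}d^q(i,C')<\sum_{i\in N'}d^q(i,W)$. *)

theory Defs
  imports "HOL-Analysis.Analysis"
begin

(* Agents are indexed by {..<n}; agent i is located at loc i in the metric space (M,d).
   Candidates C are a finite subset of M.  Outcomes W are subsets of C. *)

(* d^q(x,W): q-th smallest distance from x to points of W (counting points of W
   with equal distance separately); +infinity if W has fewer than q points. *)
definition dq :: "('a \<Rightarrow> 'a \<Rightarrow> real) \<Rightarrow> nat \<Rightarrow> 'a \<Rightarrow> 'a set \<Rightarrow> ereal" where
  "dq d q x W = Inf {ereal r | r. q \<le> card {w \<in> W. d x w \<le> r}}"

definition outcome :: "'a set \<Rightarrow> nat \<Rightarrow> 'a set \<Rightarrow> bool" where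
  "outcome C k W \<longleftrightarrow> W \<subseteq> C \<and> card W \<le> k"

definition UPRF :: "('a \<Rightarrow> 'a \<Rightarrow> real) \<Rightarrow> 'a set \<Rightarrow> nat \<Rightarrow> (nat \<Rightarrow> 'a) \<Rightarrow> nat \<Rightarrow> 'a set \<Rightarrow> bool" where
  "UPRF d M n loc k W \<longleftrightarrow>
     \<not> (\<exists>(l::nat) N' (y::real). N' \<subseteq> {..<n} \<and> real (card N') \<ge> real l * real n / real k \<and>
          (\<forall>i\<in>N'. \<forall>i'\<in>N'. d (loc i) (loc i') \<le> y) \<and>
          card ((\<Union>i\<in>N'. {x \<in> M. d (loc i) x \<le> y}) \<inter> W) < l)"

definition in_q_core :: "('a \<Rightarrow> 'a \<Rightarrow> real) \<Rightarrow> nat \<Rightarrow> (nat \<Rightarrow> 'a) \<Rightarrow> nat \<Rightarrow> 'a set \<Rightarrow> real \<Rightarrow> nat \<Rightarrow> 'a set \<Rightarrow> bool" where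
  "in_q_core d n loc k C \<alpha> q W \<longleftrightarrow>
     \<not> (\<exists>(l::nat) N' C'. N' \<subseteq> {..<n} \<and> real (card N') \<ge> real l * real n / real k \<and>
          C' \<subseteq> C \<and> q \<le> card C' \<and> card C' \<le> l \<and>
          (\<forall>i\<in>N'. ereal \<alpha> * dq d q (loc i) C' < dq d q (loc i) W))"

definition rq :: "('a \<Rightarrow> 'a \<Rightarrow> real) \<Rightarrow> nat \<Rightarrow> (nat \<Rightarrow> 'a) \<Rightarrow> nat \<Rightarrow> nat \<Rightarrow> nat \<Rightarrow> real" where
  "rq d n loc k q i = Inf {r. real (card {j \<in> {..<n}. d (loc i) (loc j) \<le> r}) \<ge> real q * real n / real k}"

definition q_ind_fair :: "('a \<Rightarrow> 'a \<Rightarrow> real) \<Rightarrow> nat \<Rightarrow> (nat \<Rightarrow> 'a) \<Rightarrow> nat \<Rightarrow> real \<Rightarrow> nat \<Rightarrow> 'a set \<Rightarrow> bool" where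
  "q_ind_fair d n loc k \<beta> q W \<longleftrightarrow>
     (\<forall>i<n. dq d q (loc i) W \<le> ereal (\<beta> * rq d n loc k q i))"

definition in_q_tcore_restr :: "('a \<Rightarrow> 'a \<Rightarrow> real) \<Rightarrow> nat \<Rightarrow> (nat \<Rightarrow> 'a) \<Rightarrow> nat \<Rightarrow> 'a set \<Rightarrow> real \<Rightarrow> real \<Rightarrow> nat \<Rightarrow> 'a set \<Rightarrow> bool" where
  "in_q_tcore_restr d n loc k C \<gamma> \<alpha> q W \<longleftrightarrow>
     \<not> (\<exists>(l::nat) N' C'. l < 2 * q \<and> N' \<subseteq> {..<n} \<and> real (card N') \<ge> \<gamma> * real l * real n / real k \<and>
          C' \<subseteq> C \<and> q \<le> card C' \<and> card C' \<le> l \<and>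
          ereal \<alpha> * (\<Sum>i\<in>N'. dq d q (loc i) C') < (\<Sum>i\<in>N'. dq d q (loc i) W))"

end

theory Submission
  imports Defs
begin

(* UPRF says that any q n/k agents within mutual distance y have at least q winners within
   distance y of one of them, so every point within s of all these agents has its q-th closest
   winner within s + y.  Each guarantee follows by exhibiting such a cohesive group.

   Individual fairness: the agents in the ball of radius r^q(i) around agent i give the factor 3.

   Core: double counting over the q-balls of the deviators inside C' yields a candidate lying in
   the balls of at least q n/k deviators; the one among them with the largest radius R has q
   winners within 4R, and 4 <= (5 + sqrt 33)/2.

   Transferable core with l < 2q: two q-balls inside C' must meet, so deviators i, j are within
   r_i + r_j.  With t the q n/k-quantile of the radii, each deviator has q winners within
   r_i + 3t, and all but fewer than q n/k <= |N'|/gamma deviators have radius at least t;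
   summing gives the factor (4 gamma - 1)/(gamma - 1) <= (5 gamma + 1)/(gamma - 1). *)


lemma ex_quantile:
  fixes f :: "'i \<Rightarrow> real" and \<theta> :: real
  assumes "finite I" "0 < \<theta>" "\<theta> \<le> real (card I)"
  obtains t where "t \<in> f ` I" "\<theta> \<le> real (card {i\<in>I. f i \<le> t})"
    "real (card {i\<in>I. f i < t}) < \<theta>"
proof -
  define T where "T = {x \<in> f ` I. \<theta> \<le> real (card {i\<in>I. f i \<le> x})}"
  have "I \<noteq> {}"
    using assms by auto
  then have "{i\<in>I. f i \<le> Max (f ` I)} = I"
    using assms by auto
  then have "Max (f ` I) \<in> T"
    using assms \<open>I \<noteq> {}\<close> by (simp add: T_def)
  then have "T \<noteq> {}" "finite T"
    using assms by (auto simp: T_def)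
  define t where "t = Min T"
  have "t \<in> T"
    using \<open>T \<noteq> {}\<close> \<open>finite T\<close> by (simp add: t_def)
  moreover have "real (card {i\<in>I. f i < t}) < \<theta>"
  proof (cases "{i\<in>I. f i < t} = {}")
    case True
    show ?thesis
      unfolding True using assms by simp
  next
    case False
    define t' where "t' = Max (f ` {i\<in>I. f i < t})"
    have "t' \<in> f ` {i\<in>I. f i < t}"
      using False assms by (simp add: t'_def)
    then have "t' \<in> f ` I" "\<not> t \<le> t'"
      by auto
    moreover have "{i\<in>I. f i \<le> t'} = {i\<in>I. f i < t}"
      using \<open>\<not> t \<le> t'\<close> assms by (auto simp: t'_def)
    moreover have "t' \<notin> T"
      using \<open>finite T\<close> \<open>\<not> t \<le> t'\<close> by (auto simp: t_def)
    ultimately show ?thesis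
      by (simp add: T_def)
  qed
  ultimately show thesis
    using that by (auto simp: T_def)
qed

lemma pigeonhole_double_counting:
  fixes \<nu> :: real
  assumes "finite A" "finite B" "B \<noteq> {}" "card B \<le> l" "0 \<le> \<nu>" "real l * \<nu> \<le> real (card A)"
    and "\<forall>a\<in>A. q \<le> card {b\<in>B. R a b}"
  obtains b where "b \<in> B" "real q * \<nu> \<le> real (card {a\<in>A. R a b})"
proof (rule ccontr)
  assume "\<not> thesis"
  then have less: "\<forall>b\<in>B. real (card {a\<in>A. R a b}) < real q * \<nu>"
    using that by (meson not_le)
  have "real (card B) * (real q * \<nu>) \<le> real l * (real q * \<nu>)"
    using assms(4,5) by (intro mult_right_mono) auto
  also have "\<dots> \<le> real q * real (card A)"
    using mult_left_mono[OF assms(6), of "real q"] by (simp add: mult.left_commute)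
  also have "\<dots> \<le> (\<Sum>a\<in>A. real (card {b\<in>B. R a b}))"
    using assms(7) sum_bounded_below[of A "real q"] by (simp add: mult.commute)
  also have "\<dots> = (\<Sum>b\<in>B. real (card {a\<in>A. R a b}))"
    using sum.swap_restrict[OF assms(1,2), of "\<lambda>_ _. 1::real" R] by simp
  also have "\<dots> < (\<Sum>b\<in>B. real q * \<nu>)"
    using less assms(2,3) by (intro sum_strict_mono) auto
  finally show False
    by simp
qed

lemma Int_nonempty_if_card_gt:
  assumes "finite C" "A \<subseteq> C" "B \<subseteq> C" "card C < card A + card B"
  shows "A \<inter> B \<noteq> {}"
proof
  assume "A \<inter> B = {}"
  then have "card A + card B = card (A \<union> B)"
    using assms(1-3) by (metis card_Un_disjoint finite_subset)
  also have "\<dots> \<le> card C"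
    using assms(1-3) by (intro card_mono) auto
  finally show False
    using assms(4) by simp
qed

(* X is the coalition's total cost under C', m its size and t the threshold radius; the
   left-hand side bounds its total cost under W. *)
lemma tcore_cost_le:
  fixes \<gamma> \<alpha> \<theta> m t X :: real
  assumes "1 < \<gamma>" "(4 * \<gamma> - 1) / (\<gamma> - 1) \<le> \<alpha>" "0 \<le> t" "0 \<le> X"
    and "\<gamma> * \<theta> \<le> m" "(m - \<theta>) * t \<le> X"
  shows "X + 3 * (m * t) \<le> \<alpha> * X"
proof -
  have "\<gamma> * ((m - \<theta>) * t) - (\<gamma> - 1) * (m * t) = (m - \<gamma> * \<theta>) * t"
    by (simp add: algebra_simps)
  moreover have "0 \<le> (m - \<gamma> * \<theta>) * t"
    using assms(3,5) by simp
  moreover have "\<gamma> * ((m - \<theta>) * t) \<le> \<gamma> * X"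
    using assms(1,6) by (intro mult_left_mono) auto
  ultimately have "(\<gamma> - 1) * (m * t) \<le> \<gamma> * X"
    by linarith
  then have "(\<gamma> - 1) * (X + 3 * (m * t)) \<le> (4 * \<gamma> - 1) * X"
    by (simp add: algebra_simps)
  also have "\<dots> \<le> (\<alpha> * (\<gamma> - 1)) * X"
    using assms(1,2,4) by (intro mult_right_mono) (simp_all add: pos_divide_le_eq)
  finally show ?thesis
    using assms(1) by (simp add: mult.commute mult.left_commute)
qed

lemma threshold_mul_le_sum:
  fixes r :: "'i \<Rightarrow> real"
  assumes "finite I" "0 \<le> t" "\<forall>i\<in>I. 0 \<le> r i" "real (card {i\<in>I. r i < t}) < \<theta>"
  shows "(real (card I) - \<theta>) * t \<le> (\<Sum>i\<in>I. r i)"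
proof -
  let ?B = "{i\<in>I. t \<le> r i}"
  have "card I = card (?B \<union> {i\<in>I. r i < t})"
    by (rule arg_cong[where f = card]) auto
  also have "\<dots> = card ?B + card {i\<in>I. r i < t}"
    using assms(1) by (intro card_Un_disjoint) auto
  finally have "(real (card I) - \<theta>) * t \<le> real (card ?B) * t"
    using assms(2,4) by (intro mult_right_mono) auto
  also have "\<dots> \<le> (\<Sum>i\<in>?B. r i)"
    using sum_bounded_below[of ?B t r] by simp
  also have "\<dots> \<le> (\<Sum>i\<in>I. r i)"
    using assms(1,3) by (intro sum_mono2) auto
  finally show ?thesis .
qed

lemma dq_le:
  assumes "finite W" "S \<subseteq> W" "q \<le> card S" "\<forall>w\<in>S. d x w \<le> r"
  shows "dq d q x W \<le> ereal r"
proof -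
  have "card S \<le> card {w\<in>W. d x w \<le> r}"
    using assms by (intro card_mono) auto
  then show ?thesis
    using assms(3) unfolding dq_def by (intro Inf_lower) auto
qed

context Metric_space
begin

lemma dq_nonneg:
  assumes "1 \<le> q"
  shows "0 \<le> dq d q x W"
  unfolding dq_def
proof (rule Inf_greatest)
  fix z
  assume "z \<in> {ereal r |r. q \<le> card {w\<in>W. d x w \<le> r}}"
  then obtain r where r: "z = ereal r" "q \<le> card {w\<in>W. d x w \<le> r}"
    by auto
  then have "0 < card {w\<in>W. d x w \<le> r}"
    using assms by linarith
  then obtain w where "d x w \<le> r"
    by (auto simp: card_gt_0_iff)
  then have "0 \<le> r"
    using nonneg[of x w] by linarith
  then show "0 \<le> z"
    using r(1) by simp
qed

lemma dq_eq_quantile: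
  assumes "finite W" "1 \<le> q" "q \<le> card W"
  obtains \<rho> where "\<And>x. dq d q x W = ereal (\<rho> x)" "\<And>x. 0 \<le> \<rho> x"
    "\<And>x. q \<le> card {w\<in>W. d x w \<le> \<rho> x}"
proof -
  have "\<exists>r. dq d q x W = ereal r \<and> 0 \<le> r \<and> q \<le> card {w\<in>W. d x w \<le> r}" for x
  proof -
    obtain r where r: "r \<in> d x ` W" "real q \<le> real (card {w\<in>W. d x w \<le> r})"
      "real (card {w\<in>W. d x w < r}) < real q"
      using ex_quantile[of W "real q" "d x"] assms by auto
    have "r \<le> r'" if "q \<le> card {w\<in>W. d x w \<le> r'}" for r'
    proof (rule ccontr)
      assume "\<not> r \<le> r'"
      then have "card {w\<in>W. d x w \<le> r'} \<le> card {w\<in>W. d x w < r}"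
        using assms by (intro card_mono) auto
      then show False
        using that r(3) by linarith
    qed
    then have "dq d q x W = ereal r"
      unfolding dq_def using r(2) by (intro antisym Inf_lower Inf_greatest) auto
    then show ?thesis
      using r by auto
  qed
  then show thesis
    using that by metis
qed

lemma UPRF_dq_le_near_group:
  assumes "UPRF d M n loc k W" "finite W" "G \<subseteq> {..<n}" "loc ` G \<subseteq> M"
    and "real q * real n / real k \<le> real (card G)"
    and "\<forall>j\<in>G. \<forall>j'\<in>G. d (loc j) (loc j') \<le> y"
    and "x \<in> M" "\<forall>j\<in>G. d x (loc j) \<le> s"
  shows "dq d q x W \<le> ereal (s + y)"
proof (rule dq_le)
  let ?S = "(\<Union>j\<in>G. {w \<in> M. d (loc j) w \<le> y}) \<inter> W"
  have "\<not> card ?S < q"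
    using assms(1,3,5,6) unfolding UPRF_def by blast
  then show "q \<le> card ?S"
    by simp
  show "\<forall>w\<in>?S. d x w \<le> s + y"
  proof
    fix w
    assume "w \<in> ?S"
    then obtain j where "j \<in> G" "w \<in> M" "d (loc j) w \<le> y"
      by auto
    then have "d x w \<le> d x (loc j) + d (loc j) w"
      using assms(4,7) by (intro triangle) auto
    moreover have "d x (loc j) \<le> s"
      using assms(8) \<open>j \<in> G\<close> by blast
    ultimately show "d x w \<le> s + y"
      using \<open>d (loc j) w \<le> y\<close> by linarith
  qed
qed (use assms(2) in auto)

lemma UPRF_dq_le_near_ball:
  assumes "UPRF d M n loc k W" "finite W" "G \<subseteq> {..<n}" "loc ` G \<subseteq> M"
    and "real q * real n / real k \<le> real (card G)"
    and "c \<in> M" "\<forall>j\<in>G. d (loc j) c \<le> R" "x \<in> M"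
  shows "dq d q x W \<le> ereal (d x c + 3 * R)"
proof -
  have "d (loc j) (loc j') \<le> 2 * R" if "j \<in> G" "j' \<in> G" for j j'
  proof -
    have "d (loc j) (loc j') \<le> d (loc j) c + d (loc j') c"
      using that assms(4,6) by (intro triangle') auto
    moreover have "d (loc j) c \<le> R" "d (loc j') c \<le> R"
      using that assms(7) by auto
    ultimately show ?thesis
      by linarith
  qed
  moreover have "d x (loc j) \<le> d x c + R" if "j \<in> G" for j
  proof -
    have "d x (loc j) \<le> d x c + d (loc j) c"
      using that assms(4,6,8) by (intro triangle') auto
    moreover have "d (loc j) c \<le> R"
      using that assms(7) by auto
    ultimately show ?thesis
      by linarith
  qed
  ultimately have "dq d q x W \<le> ereal ((d x c + R) + 2 * R)"
    using assms(5,8) by (intro UPRF_dq_le_near_group[OF assms(1-4)]) auto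
  then show ?thesis
    by (simp add: algebra_simps)
qed

lemma UPRF_ex_dq_le_four_radius:
  assumes "UPRF d M n loc k W" "finite W" "G \<subseteq> {..<n}" "loc ` G \<subseteq> M" "G \<noteq> {}"
    and "real q * real n / real k \<le> real (card G)"
    and "c \<in> M" "\<forall>j\<in>G. d (loc j) c \<le> r j"
  obtains i where "i \<in> G" "dq d q (loc i) W \<le> ereal (4 * r i)"
proof -
  have "finite G"
    using assms(3) finite_subset by blast
  then obtain i where "i \<in> G" "r i = (MAX j\<in>G. r j)"
    using assms(5) by (metis (no_types, lifting) Max_in finite_imageI image_iff image_is_empty)
  then have "\<forall>j\<in>G. d (loc j) c \<le> r i"
    using assms(8) \<open>finite G\<close> by (auto intro: order_trans)
  then have "dq d q (loc i) W \<le> ereal (d (loc i) c + 3 * r i)"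
    using \<open>i \<in> G\<close> assms(4,6,7) by (intro UPRF_dq_le_near_ball[OF assms(1-4)]) auto
  also have "\<dots> \<le> ereal (4 * r i)"
    using \<open>i \<in> G\<close> assms(8) by simp
  finally show thesis
    using that \<open>i \<in> G\<close> by blast
qed

lemma UPRF_dq_le_add_threshold:
  assumes "UPRF d M n loc k W" "finite W" "N \<subseteq> {..<n}" "loc ` N \<subseteq> M"
    and "\<forall>i\<in>N. \<forall>j\<in>N. d (loc i) (loc j) \<le> r i + r j"
    and "real q * real n / real k \<le> real (card {j\<in>N. r j \<le> t})" "i \<in> N"
  shows "dq d q (loc i) W \<le> ereal (r i + 3 * t)"
proof -
  let ?G = "{j\<in>N. r j \<le> t}"
  have "\<forall>j\<in>?G. \<forall>j'\<in>?G. d (loc j) (loc j') \<le> 2 * t"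
    using assms(5) by fastforce
  moreover have "\<forall>j\<in>?G. d (loc i) (loc j) \<le> r i + t"
    using assms(5,7) by fastforce
  moreover have "?G \<subseteq> {..<n}" "loc ` ?G \<subseteq> M" "loc i \<in> M"
    using assms(3,4,7) by auto
  ultimately have "dq d q (loc i) W \<le> ereal ((r i + t) + 2 * t)"
    using assms(6) by (intro UPRF_dq_le_near_group[OF assms(1,2)])
  then show ?thesis
    by (simp add: algebra_simps)
qed

lemma dist_le_add_if_q_balls_meet:
  assumes "finite C" "C \<subseteq> M" "card C < 2 * q" "x \<in> M" "y \<in> M"
    and "q \<le> card {c\<in>C. d x c \<le> r}" "q \<le> card {c\<in>C. d y c \<le> s}"
  shows "d x y \<le> r + s"
proof -
  have "{c\<in>C. d x c \<le> r} \<inter> {c\<in>C. d y c \<le> s} \<noteq> {}"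
    using assms(1,3,6,7) by (intro Int_nonempty_if_card_gt[of C]) auto
  then obtain c where "c \<in> C" "d x c \<le> r" "d y c \<le> s"
    by auto
  moreover have "d x y \<le> d x c + d y c"
    using \<open>c \<in> C\<close> assms(2,4,5) by (intro triangle') auto
  ultimately show ?thesis
    by linarith
qed

lemma UPRF_sum_dq_le:
  assumes "UPRF d M n loc k W" "finite W" "N \<subseteq> {..<n}" "loc ` N \<subseteq> M"
    and "\<forall>i\<in>N. \<forall>j\<in>N. d (loc i) (loc j) \<le> r i + r j" "\<forall>i\<in>N. 0 \<le> r i"
    and "0 < real q * real n / real k" "\<gamma> * (real q * real n / real k) \<le> real (card N)"
    and "1 < \<gamma>" "(4 * \<gamma> - 1) / (\<gamma> - 1) \<le> \<alpha>"
  shows "(\<Sum>i\<in>N. dq d q (loc i) W) \<le> ereal (\<alpha> * (\<Sum>i\<in>N. r i))"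
proof -
  define \<theta> where "\<theta> = real q * real n / real k"
  define m where "m = real (card N)"
  have "finite N"
    using assms(3) finite_subset by blast
  have "0 < \<theta>"
    using assms(7) by (simp add: \<theta>_def)
  then have "\<theta> \<le> \<gamma> * \<theta>"
    using mult_right_mono[of 1 \<gamma> \<theta>] assms(9) by simp
  then have "\<theta> \<le> real (card N)"
    using assms(8) unfolding \<theta>_def by linarith
  then obtain t where "t \<in> r ` N" and t_low: "\<theta> \<le> real (card {i\<in>N. r i \<le> t})"
    and t_high: "real (card {i\<in>N. r i < t}) < \<theta>"
    by (rule ex_quantile[OF \<open>finite N\<close> \<open>0 < \<theta>\<close>])
  have "0 \<le> t"
    using \<open>t \<in> r ` N\<close> assms(6) by auto
  have "dq d q (loc i) W \<le> ereal (r i + 3 * t)" if "i \<in> N" for i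
    using t_low that unfolding \<theta>_def by (rule UPRF_dq_le_add_threshold[OF assms(1-5)])
  then have "(\<Sum>i\<in>N. dq d q (loc i) W) \<le> (\<Sum>i\<in>N. ereal (r i + 3 * t))"
    by (intro sum_mono)
  also have "\<dots> = ereal ((\<Sum>i\<in>N. r i) + 3 * (m * t))"
    by (simp add: m_def sum.distrib algebra_simps)
  also have "\<dots> \<le> ereal (\<alpha> * (\<Sum>i\<in>N. r i))"
  proof -
    have "(m - \<theta>) * t \<le> (\<Sum>i\<in>N. r i)"
      unfolding m_def by (rule threshold_mul_le_sum[OF \<open>finite N\<close> \<open>0 \<le> t\<close> assms(6) t_high])
    moreover have "\<gamma> * \<theta> \<le> m"
      using assms(8) by (simp add: \<theta>_def m_def)
    moreover have "0 \<le> (\<Sum>i\<in>N. r i)"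
      using assms(6) by (simp add: sum_nonneg)
    ultimately show ?thesis
      using tcore_cost_le[OF assms(9,10) \<open>0 \<le> t\<close>] by simp
  qed
  finally show ?thesis .
qed

lemma UPRF_imp_q_ind_fair:
  assumes U: "UPRF d M n loc k W" and "finite W" "loc ` {..<n} \<subseteq> M"
    and "1 \<le> q" "q \<le> k"
  shows "q_ind_fair d n loc k 3 q W"
  unfolding q_ind_fair_def
proof (intro allI impI)
  fix i
  assume "i < n"
  then have "loc i \<in> M"
    using assms(3) by auto
  define S where
    "S = {r. real q * real n / real k \<le> real (card {j\<in>{..<n}. d (loc i) (loc j) \<le> r})}"
  have bound: "dq d q (loc i) W \<le> ereal (3 * r)" if "r \<in> S" for r
  proof -
    have "dq d q (loc i) W \<le> ereal (d (loc i) (loc i) + 3 * r)"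
      using that \<open>i < n\<close> \<open>loc i \<in> M\<close> assms(3) unfolding S_def
      by (intro UPRF_dq_le_near_ball[OF U \<open>finite W\<close>, where G = "{j\<in>{..<n}. d (loc i) (loc j) \<le> r}"])
        (auto simp: commute)
    then show ?thesis
      using \<open>loc i \<in> M\<close> by simp
  qed
  define R where "R = Max ((\<lambda>j. d (loc i) (loc j)) ` {..<n})"
  have "{j\<in>{..<n}. d (loc i) (loc j) \<le> R} = {..<n}"
    by (auto simp: R_def)
  moreover have "real q * real n / real k \<le> real n"
  proof -
    have "real q * real n \<le> real k * real n"
      using \<open>q \<le> k\<close> by (intro mult_right_mono) auto
    then show ?thesis
      using \<open>q \<le> k\<close> \<open>1 \<le> q\<close> by (simp add: pos_divide_le_eq mult.commute)
  qed
  ultimately have "R \<in> S"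
    by (simp add: S_def)
  then obtain x where x: "dq d q (loc i) W = ereal x"
    using bound dq_nonneg[OF \<open>1 \<le> q\<close>, of "loc i" W] by (cases "dq d q (loc i) W") auto
  have "x / 3 \<le> Inf S"
  proof (rule cInf_greatest)
    show "S \<noteq> {}"
      using \<open>R \<in> S\<close> by auto
    show "x / 3 \<le> r" if "r \<in> S" for r
      using bound[OF that] x by simp
  qed
  then show "dq d q (loc i) W \<le> ereal (3 * rq d n loc k q i)"
    unfolding rq_def S_def[symmetric] x by simp
qed

lemma UPRF_imp_in_q_core:
  assumes U: "UPRF d M n loc k W" and "finite W" "finite C" "C \<subseteq> M" "loc ` {..<n} \<subseteq> M"
    and "0 < n" "0 < k" "1 \<le> q" "4 \<le> \<alpha>"
  shows "in_q_core d n loc k C \<alpha> q W"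
  unfolding in_q_core_def
proof
  assume "\<exists>l N' C'. N' \<subseteq> {..<n} \<and> real l * real n / real k \<le> real (card N') \<and>
    C' \<subseteq> C \<and> q \<le> card C' \<and> card C' \<le> l \<and>
    (\<forall>i\<in>N'. ereal \<alpha> * dq d q (loc i) C' < dq d q (loc i) W)"
  then obtain l N' C' where N': "N' \<subseteq> {..<n}" "real l * real n / real k \<le> real (card N')"
    and C': "C' \<subseteq> C" "q \<le> card C'" "card C' \<le> l"
    and blocking: "\<forall>i\<in>N'. ereal \<alpha> * dq d q (loc i) C' < dq d q (loc i) W"
    by blast
  have "finite C'" "finite N'"
    using C'(1) N'(1) \<open>finite C\<close> finite_subset by blast+
  have "C' \<noteq> {}"
    using C'(2) \<open>1 \<le> q\<close> by auto
  obtain \<rho> where \<rho>: "\<And>x. dq d q x C' = ereal (\<rho> x)" "\<And>x. 0 \<le> \<rho> x"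
    "\<And>x. q \<le> card {c\<in>C'. d x c \<le> \<rho> x}"
    using dq_eq_quantile[OF \<open>finite C'\<close> \<open>1 \<le> q\<close> C'(2)] by blast
  define G where "G c = {i\<in>N'. d (loc i) c \<le> \<rho> (loc i)}" for c
  obtain c where "c \<in> C'" and c: "real q * (real n / real k) \<le> real (card (G c))"
    using pigeonhole_double_counting[OF \<open>finite N'\<close> \<open>finite C'\<close> \<open>C' \<noteq> {}\<close> C'(3),
        where \<nu> = "real n / real k" and q = q and R = "\<lambda>i c. d (loc i) c \<le> \<rho> (loc i)"]
      N'(2) \<rho>(3)
    unfolding G_def by auto
  moreover have "0 < real q * (real n / real k)"
    using assms(6-8) by simp
  ultimately have "G c \<noteq> {}"
    by auto
  moreover have "G c \<subseteq> {..<n}" "loc ` G c \<subseteq> M" "c \<in> M"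
    using N'(1) assms(4,5) C'(1) \<open>c \<in> C'\<close> unfolding G_def by auto
  ultimately obtain i where "i \<in> G c" "dq d q (loc i) W \<le> ereal (4 * \<rho> (loc i))"
    using c by (elim UPRF_ex_dq_le_four_radius[OF U \<open>finite W\<close>]) (auto simp: G_def)
  moreover have "ereal (\<alpha> * \<rho> (loc i)) < dq d q (loc i) W"
    using blocking \<open>i \<in> G c\<close> \<rho>(1) unfolding G_def by auto
  ultimately have "ereal (\<alpha> * \<rho> (loc i)) < ereal (4 * \<rho> (loc i))"
    by (blast intro: order.strict_trans2)
  then have "\<alpha> * \<rho> (loc i) < 4 * \<rho> (loc i)"
    by simp
  moreover have "4 * \<rho> (loc i) \<le> \<alpha> * \<rho> (loc i)"
    using \<rho>(2) \<open>4 \<le> \<alpha>\<close> by (intro mult_right_mono)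
  ultimately show False
    by simp
qed

lemma UPRF_imp_in_q_tcore_restr:
  assumes U: "UPRF d M n loc k W" and "finite W" "finite C" "C \<subseteq> M" "loc ` {..<n} \<subseteq> M"
    and "0 < n" "0 < k" "1 \<le> q" "1 < \<gamma>" "(4 * \<gamma> - 1) / (\<gamma> - 1) \<le> \<alpha>"
  shows "in_q_tcore_restr d n loc k C \<gamma> \<alpha> q W"
  unfolding in_q_tcore_restr_def
proof
  assume "\<exists>l N' C'. l < 2 * q \<and> N' \<subseteq> {..<n} \<and>
    \<gamma> * real l * real n / real k \<le> real (card N') \<and> C' \<subseteq> C \<and> q \<le> card C' \<and> card C' \<le> l \<and>
    ereal \<alpha> * (\<Sum>i\<in>N'. dq d q (loc i) C') < (\<Sum>i\<in>N'. dq d q (loc i) W)"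
  then obtain l N' C' where "l < 2 * q" and N': "N' \<subseteq> {..<n}"
    "\<gamma> * real l * real n / real k \<le> real (card N')"
    and C': "C' \<subseteq> C" "q \<le> card C'" "card C' \<le> l"
    and blocking: "ereal \<alpha> * (\<Sum>i\<in>N'. dq d q (loc i) C') < (\<Sum>i\<in>N'. dq d q (loc i) W)"
    by blast
  have "finite C'"
    using C'(1) \<open>finite C\<close> finite_subset by blast
  have "C' \<subseteq> M" "card C' < 2 * q"
    using C' \<open>C \<subseteq> M\<close> \<open>l < 2 * q\<close> by auto
  have "loc ` N' \<subseteq> M"
    using N'(1) assms(5) by (meson image_mono order_trans)
  obtain \<rho> where \<rho>: "\<And>x. dq d q x C' = ereal (\<rho> x)" "\<And>x. 0 \<le> \<rho> x"
    "\<And>x. q \<le> card {c\<in>C'. d x c \<le> \<rho> x}"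
    using dq_eq_quantile[OF \<open>finite C'\<close> \<open>1 \<le> q\<close> C'(2)] by blast
  have close: "\<forall>i\<in>N'. \<forall>j\<in>N'. d (loc i) (loc j) \<le> \<rho> (loc i) + \<rho> (loc j)"
    using \<open>loc ` N' \<subseteq> M\<close>
    by (blast intro: dist_le_add_if_q_balls_meet[OF \<open>finite C'\<close> \<open>C' \<subseteq> M\<close> \<open>card C' < 2 * q\<close>]
        \<rho>(3))
  have "\<gamma> * (real q * real n / real k) \<le> \<gamma> * (real l * real n / real k)"
    using C'(2,3) \<open>1 < \<gamma>\<close> by (intro mult_left_mono divide_right_mono mult_right_mono) auto
  then have "\<gamma> * (real q * real n / real k) \<le> real (card N')"
    using N'(2) by (simp add: mult.assoc)
  then have "(\<Sum>i\<in>N'. dq d q (loc i) W) \<le> ereal (\<alpha> * (\<Sum>i\<in>N'. \<rho> (loc i)))"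
    using close \<rho>(2) assms(6-10) N'(1) \<open>loc ` N' \<subseteq> M\<close>
    by (intro UPRF_sum_dq_le[OF U \<open>finite W\<close>]) auto
  then show False
    using blocking \<rho>(1) by simp
qed

end

theorem theorem11:
  fixes M :: "'a set" and d :: "'a \<Rightarrow> 'a \<Rightarrow> real"
    and n k :: nat and loc :: "nat \<Rightarrow> 'a" and C W :: "'a set"
  assumes "Metric_space M d"
    and "n \<ge> 1" and "k \<ge> 1"
    and "finite C" and "C \<subseteq> M"
    and "loc ` {..<n} \<subseteq> C"
    and "outcome C k W"
    and "UPRF d M n loc k W"
  shows "\<forall>q. 1 \<le> q \<and> q \<le> k \<longrightarrow>
           in_q_core d n loc k C ((5 + sqrt 33) / 2) q W
         \<and> (k \<le> n \<longrightarrow> q_ind_fair d n loc k 3 q W)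
         \<and> (\<forall>\<gamma>::real. \<gamma> > 1 \<longrightarrow> in_q_tcore_restr d n loc k C \<gamma> ((5 * \<gamma> + 1) / (\<gamma> - 1)) q W)"
proof -
  interpret Metric_space M d
    by fact
  have "W \<subseteq> C"
    using \<open>outcome C k W\<close> by (simp add: outcome_def)
  then have "finite W"
    using \<open>finite C\<close> finite_subset by blast
  have agents: "loc ` {..<n} \<subseteq> M" "0 < n" "0 < k"
    using assms(2,3,5,6) by auto
  have "3 \<le> sqrt 33"
    by (rule real_le_rsqrt) simp
  then have "4 \<le> (5 + sqrt 33) / 2"
    by simp
  then have core: "in_q_core d n loc k C ((5 + sqrt 33) / 2) q W" if "1 \<le> q" for q
    using UPRF_imp_in_q_core[OF \<open>UPRF d M n loc k W\<close> \<open>finite W\<close> \<open>finite C\<close> \<open>C \<subseteq> M\<close> agents]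
      that by blast
  have fair: "q_ind_fair d n loc k 3 q W" if "1 \<le> q" "q \<le> k" for q
    using UPRF_imp_q_ind_fair[OF \<open>UPRF d M n loc k W\<close> \<open>finite W\<close> agents(1)] that by blast
  have tcore: "in_q_tcore_restr d n loc k C \<gamma> ((5 * \<gamma> + 1) / (\<gamma> - 1)) q W"
    if "1 \<le> q" "1 < \<gamma>" for q \<gamma>
  proof (rule UPRF_imp_in_q_tcore_restr[OF \<open>UPRF d M n loc k W\<close> \<open>finite W\<close> \<open>finite C\<close> \<open>C \<subseteq> M\<close>
        agents that])
    show "(4 * \<gamma> - 1) / (\<gamma> - 1) \<le> (5 * \<gamma> + 1) / (\<gamma> - 1)"
      using \<open>1 < \<gamma>\<close> by (intro divide_right_mono) auto
  qed
  show ?thesis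
    using core fair tcore by blast
qed

end
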